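(* Suppose $P_\mu$ is the Bernoulli distribution with mean $\mu$, and fix $\theta>2/3$. Then $q_\theta(\mu)\ge\exp(-0.5)/3$ for all $\mu\ge(1+\theta)/2$.
   Context: For $\mu>\theta$, with $X_1,X_2,\dots$ i.i.d. $\sim P_\mu$ and $M_n=\frac1n\sum_{i=1}^nX_i$, $q_\theta(\mu):=\mathbb{P}[M_n>\theta\text{ for all }n\ge1]$. *)

theory Defs
  imports "HOL-Probability.Probability"
begin

text \<open>Canonical i.i.d. model: the infinite product of Bernoulli(mu) laws on bool.
  Coordinate i (i = 0,1,2,...) is the outcome X_(i+1), as the 0/1 value of_bool (w i).\<close>

definition bern_seq :: "real \<Rightarrow> (nat \<Rightarrow> bool) measure" where
  "bern_seq \<mu> = PiM UNIV (\<lambda>_::nat. measure_pmf (bernoulli_pmf \<mu>))"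

definition sample_mean :: "(nat \<Rightarrow> bool) \<Rightarrow> nat \<Rightarrow> real" where
  "sample_mean w n = (\<Sum>i<n. of_bool (w i)) / real n"

definition q_theta :: "real \<Rightarrow> real \<Rightarrow> real" where
  "q_theta \<theta> \<mu> = measure (bern_seq \<mu>)
     {w \<in> space (bern_seq \<mu>). \<forall>n\<ge>1. sample_mean w n > \<theta>}"

end

theory Submission
  imports Defs
begin

(* Let S_n be the sum of X_i - \<theta> over the first n draws, so that q_\<theta>(\<mu>) is the
   probability that S stays positive. The first draw must succeed, which puts S at 1 - \<theta>.
   For \<mu> \<ge> (1 + \<theta>)/2 we have E exp (\<theta> - X) \<le> 1, so exp (-(s + S_n)) is a
   supermartingale and a walk started at s > 0 ever drops to 0 or below with probability
   at most exp (-s). If the first K = \<lceil>1/(1 - \<theta>)\<rceil> draws all succeed, the walk is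
   at height at least 1, whence q_\<theta>(\<mu>) \<ge> \<mu>^K (1 - exp (-1)). Bernoulli's inequality
   gives \<mu>^K \<ge> 1/3, and 1 - exp (-1) \<ge> exp (-1/2). *)

lemma space_bern_seq [simp]: "space (bern_seq \<mu>) = UNIV"
  by (simp add: bern_seq_def space_PiM)

lemma prob_space_bern_seq: "prob_space (bern_seq \<mu>)"
  unfolding bern_seq_def by (intro prob_space_PiM prob_space_measure_pmf)

lemma measure_bern_seq_first_step:
  assumes A: "A \<in> sets (bern_seq \<mu>)" and \<mu>: "0 \<le> \<mu>" "\<mu> \<le> 1"
  shows "measure (bern_seq \<mu>) A = \<mu> * measure (bern_seq \<mu>) {\<omega>. case_nat True \<omega> \<in> A}
     + (1 - \<mu>) * measure (bern_seq \<mu>) {\<omega>. case_nat False \<omega> \<in> A}"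
proof -
  let ?M = "measure_pmf (bernoulli_pmf \<mu>)"
  interpret S: sequence_space ?M
    by unfold_locales
  have S_eq: "S.S = bern_seq \<mu>" unfolding bern_seq_def by simp
  let ?cons = "(\<lambda>(x, \<omega>). case_nat x \<omega>) :: bool \<times> (nat \<Rightarrow> bool) \<Rightarrow> nat \<Rightarrow> bool"
  have A': "A \<in> sets S.S" using A S_eq by simp
  have cons_meas: "?cons \<in> measurable (?M \<Otimes>\<^sub>M S.S) S.S"
    by measurable
  have "emeasure S.S A = emeasure (distr (?M \<Otimes>\<^sub>M S.S) S.S ?cons) A"
    by (simp add: S.PiM_iter)
  also have "\<dots> = emeasure (?M \<Otimes>\<^sub>M S.S) (?cons -` A \<inter> space (?M \<Otimes>\<^sub>M S.S))"
    by (rule emeasure_distr[OF cons_meas A'])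
  also have "\<dots> = (\<integral>\<^sup>+x. emeasure S.S (Pair x -` (?cons -` A \<inter> space (?M \<Otimes>\<^sub>M S.S))) \<partial>?M)"
    by (rule S.P.emeasure_pair_measure_alt) (use cons_meas A' in measurable)
  also have "\<dots> = (\<integral>\<^sup>+x. emeasure S.S {\<omega>. case_nat x \<omega> \<in> A} \<partial>?M)"
    by (intro nn_integral_cong arg_cong2[where f=emeasure])
      (auto simp: space_pair_measure space_PiM)
  also have "\<dots> = ennreal (\<mu> * measure S.S {\<omega>. case_nat True \<omega> \<in> A}
      + (1 - \<mu>) * measure S.S {\<omega>. case_nat False \<omega> \<in> A})"
    using \<mu> by (simp add: S.P.emeasure_eq_measure ennreal_mult' ennreal_plus mult.commute)
  finally have "ennreal (measure S.S A) = ennreal (\<mu> * measure S.S {\<omega>. case_nat True \<omega> \<in> A}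
      + (1 - \<mu>) * measure S.S {\<omega>. case_nat False \<omega> \<in> A})"
    by (simp add: S.P.emeasure_eq_measure)
  then show ?thesis
    using \<mu> unfolding S_eq by (subst (asm) ennreal_inj) auto
qed

definition walk :: "real \<Rightarrow> (nat \<Rightarrow> bool) \<Rightarrow> nat \<Rightarrow> real" where
  "walk \<theta> w n = (\<Sum>i<n. of_bool (w i) - \<theta>)"

lemma walk_0 [simp]: "walk \<theta> w 0 = 0"
  by (simp add: walk_def)

lemma walk_case_nat_Suc [simp]:
  "walk \<theta> (case_nat x \<omega>) (Suc n) = of_bool x - \<theta> + walk \<theta> \<omega> n"
  unfolding walk_def by (subst sum.lessThan_Suc_shift) simp

lemma sample_mean_gt_iff_walk_pos:
  assumes "n \<ge> 1"
  shows "sample_mean w n > \<theta> \<longleftrightarrow> walk \<theta> w n > 0"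
proof -
  have "walk \<theta> w n = (\<Sum>i<n. of_bool (w i)) - real n * \<theta>"
    by (simp add: walk_def sum_subtractf)
  then show ?thesis
    using assms by (simp add: sample_mean_def pos_less_divide_eq mult.commute)
qed

definition ruin_within :: "real \<Rightarrow> nat \<Rightarrow> real \<Rightarrow> (nat \<Rightarrow> bool) set" where
  "ruin_within \<theta> N s = {w. \<exists>n\<le>N. s + walk \<theta> w n \<le> 0}"

definition ruin :: "real \<Rightarrow> real \<Rightarrow> (nat \<Rightarrow> bool) set" where
  "ruin \<theta> s = {w. \<exists>n. s + walk \<theta> w n \<le> 0}"

lemma ruin_within_in_sets [measurable]: "ruin_within \<theta> N s \<in> sets (bern_seq \<mu>)"
proof -
  have "ruin_within \<theta> N s = {w \<in> space (bern_seq \<mu>). \<exists>n\<le>N. s + (\<Sum>i<n. of_bool (w i) - \<theta>) \<le> 0}"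
    by (simp add: ruin_within_def walk_def)
  also have "\<dots> \<in> sets (bern_seq \<mu>)"
    unfolding bern_seq_def by measurable
  finally show ?thesis .
qed

lemma ruin_eq_UN_ruin_within: "ruin \<theta> s = (\<Union>N. ruin_within \<theta> N s)"
  by (auto simp: ruin_def ruin_within_def)

lemma incseq_ruin_within: "incseq (\<lambda>N. ruin_within \<theta> N s)"
  by (auto simp: incseq_def ruin_within_def intro: le_trans)

lemma ruin_within_0: "s > 0 \<Longrightarrow> ruin_within \<theta> 0 s = {}"
  by (simp add: ruin_within_def)

lemma ruin_within_Suc_case_nat:
  assumes "s > 0"
  shows "{\<omega>. case_nat x \<omega> \<in> ruin_within \<theta> (Suc N) s} = ruin_within \<theta> N (s + of_bool x - \<theta>)"
proof -
  have "(\<exists>n\<le>Suc N. s + walk \<theta> (case_nat x \<omega>) n \<le> 0) \<longleftrightarrow>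
        (\<exists>m\<le>N. s + walk \<theta> (case_nat x \<omega>) (Suc m) \<le> 0)" for \<omega>
  proof
    assume "\<exists>n\<le>Suc N. s + walk \<theta> (case_nat x \<omega>) n \<le> 0"
    then obtain n where "n \<le> Suc N" "s + walk \<theta> (case_nat x \<omega>) n \<le> 0" by blast
    moreover from this assms obtain m where "n = Suc m" by (cases n) auto
    ultimately show "\<exists>m\<le>N. s + walk \<theta> (case_nat x \<omega>) (Suc m) \<le> 0" by auto
  qed auto
  then show ?thesis
    by (auto simp: ruin_within_def algebra_simps)
qed

lemma measure_ruin_within_Suc:
  assumes "s > 0" "0 \<le> \<mu>" "\<mu> \<le> 1"
  shows "measure (bern_seq \<mu>) (ruin_within \<theta> (Suc N) s) =
    \<mu> * measure (bern_seq \<mu>) (ruin_within \<theta> N (s + 1 - \<theta>))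
    + (1 - \<mu>) * measure (bern_seq \<mu>) (ruin_within \<theta> N (s - \<theta>))"
  using measure_bern_seq_first_step[OF ruin_within_in_sets assms(2,3)]
  by (simp add: ruin_within_Suc_case_nat[OF assms(1)])

(* Maximal inequality for the supermartingale exp (- (s + walk \<theta> w n)), on a finite horizon. *)
lemma measure_ruin_within_le_exp:
  assumes mgf: "\<mu> * exp (\<theta> - 1) + (1 - \<mu>) * exp \<theta> \<le> 1" and \<mu>: "0 \<le> \<mu>" "\<mu> \<le> 1"
  shows "measure (bern_seq \<mu>) (ruin_within \<theta> N s) \<le> exp (- s)"
proof -
  have start_nonpos: "measure (bern_seq \<mu>) A \<le> exp (- s)" if "s \<le> 0" for A s
  proof -
    have "measure (bern_seq \<mu>) A \<le> 1"
      by (rule prob_space.prob_le_1[OF prob_space_bern_seq])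
    also have "1 \<le> exp (- s)"
      using that by simp
    finally show ?thesis .
  qed
  show ?thesis
  proof (induction N arbitrary: s)
    case 0
    show ?case
      using start_nonpos[of s] by (cases "s \<le> 0") (simp_all add: ruin_within_0)
  next
    case (Suc N)
    show ?case
    proof (cases "s \<le> 0")
      case False
      then have "measure (bern_seq \<mu>) (ruin_within \<theta> (Suc N) s)
          \<le> \<mu> * exp (- (s + 1 - \<theta>)) + (1 - \<mu>) * exp (- (s - \<theta>))"
        unfolding measure_ruin_within_Suc[OF False[unfolded not_le] \<mu>]
        using Suc.IH[of "s + 1 - \<theta>"] Suc.IH[of "s - \<theta>"] \<mu>
        by (intro add_mono mult_left_mono) auto
      also have "\<dots> = exp (- s) * (\<mu> * exp (\<theta> - 1) + (1 - \<mu>) * exp \<theta>)"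
        by (simp add: algebra_simps flip: exp_add)
      also have "\<dots> \<le> exp (- s)"
        using mgf by simp
      finally show ?thesis .
    qed (use start_nonpos in blast)
  qed
qed

(* With probability \<mu>^j the first j draws succeed and lift the start to s + j (1 - \<theta>),
   from where the exponential bound takes over. *)
lemma measure_ruin_within_le_climb:
  assumes mgf: "\<mu> * exp (\<theta> - 1) + (1 - \<mu>) * exp \<theta> \<le> 1"
    and \<mu>: "0 \<le> \<mu>" "\<mu> \<le> 1" and "\<theta> < 1" "s > 0"
  shows "measure (bern_seq \<mu>) (ruin_within \<theta> N s)
    \<le> 1 - \<mu> ^ j * (1 - exp (- (s + j * (1 - \<theta>))))"
  using \<open>s > 0\<close>
proof (induction j arbitrary: N s)
  case 0
  then show ?case
    using measure_ruin_within_le_exp[OF mgf \<mu>] by simp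
next
  case (Suc j)
  have "0 < s + Suc j * (1 - \<theta>)"
    using Suc.prems \<open>\<theta> < 1\<close> by (intro add_pos_nonneg) auto
  then have climb: "0 \<le> 1 - exp (- (s + Suc j * (1 - \<theta>)))"
    by simp
  show ?case
  proof (cases N)
    case 0
    have "\<mu> ^ Suc j * (1 - exp (- (s + Suc j * (1 - \<theta>)))) \<le> 1"
      using \<mu> climb by (intro mult_le_one power_le_one) auto
    then show ?thesis
      using Suc.prems by (simp add: 0 ruin_within_0)
  next
    case (Suc N')
    have "measure (bern_seq \<mu>) (ruin_within \<theta> N s)
        \<le> \<mu> * (1 - \<mu> ^ j * (1 - exp (- (s + 1 - \<theta> + j * (1 - \<theta>))))) + (1 - \<mu>) * 1"
      unfolding Suc measure_ruin_within_Suc[OF Suc.prems \<mu>]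
      using Suc.IH[of "s + 1 - \<theta>" N'] Suc.prems \<open>\<theta> < 1\<close> \<mu>
        prob_space.prob_le_1[OF prob_space_bern_seq]
      by (intro add_mono mult_left_mono) auto
    also have "\<dots> = 1 - \<mu> ^ Suc j * (1 - exp (- (s + Suc j * (1 - \<theta>))))"
      by (simp add: algebra_simps)
    finally show ?thesis .
  qed
qed

lemma measure_ruin_le:
  assumes "\<And>N. measure (bern_seq \<mu>) (ruin_within \<theta> N s) \<le> c"
  shows "measure (bern_seq \<mu>) (ruin \<theta> s) \<le> c"
proof -
  interpret prob_space "bern_seq \<mu>" by (rule prob_space_bern_seq)
  have "(\<lambda>N. measure (bern_seq \<mu>) (ruin_within \<theta> N s)) \<longlonglongrightarrow> measure (bern_seq \<mu>) (ruin \<theta> s)"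
    unfolding ruin_eq_UN_ruin_within
    by (rule finite_Lim_measure_incseq) (auto simp: incseq_ruin_within)
  then show ?thesis
    by (rule LIMSEQ_le_const2) (simp add: assms)
qed

lemma q_theta_eq_no_ruin:
  assumes "0 < \<theta>" "0 \<le> \<mu>" "\<mu> \<le> 1"
  shows "q_theta \<theta> \<mu> = \<mu> * (1 - measure (bern_seq \<mu>) (ruin \<theta> (1 - \<theta>)))"
proof -
  interpret prob_space "bern_seq \<mu>" by (rule prob_space_bern_seq)
  define Q where "Q = {w. \<forall>n. 0 < walk \<theta> w (Suc n)}"
  have q_Q: "q_theta \<theta> \<mu> = measure (bern_seq \<mu>) Q"
  proof -
    have "(\<forall>n\<ge>1. \<theta> < sample_mean w n) \<longleftrightarrow> (\<forall>n\<ge>1. 0 < walk \<theta> w n)" for w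
      using sample_mean_gt_iff_walk_pos by blast
    also have "\<dots> w \<longleftrightarrow> w \<in> Q" for w
      by (auto simp: Q_def dest!: Suc_le_D)
    finally show ?thesis
      unfolding q_theta_def by simp
  qed
  have "Q = {w \<in> space (bern_seq \<mu>). \<forall>n. 0 < (\<Sum>i<Suc n. of_bool (w i) - \<theta>)}"
    by (simp add: Q_def walk_def)
  also have "\<dots> \<in> sets (bern_seq \<mu>)"
    unfolding bern_seq_def by measurable
  finally have "Q \<in> sets (bern_seq \<mu>)" .
  moreover have "{\<omega>. case_nat True \<omega> \<in> Q} = space (bern_seq \<mu>) - ruin \<theta> (1 - \<theta>)"
    by (simp add: Q_def ruin_def set_eq_iff not_le)
  moreover have "{\<omega>. case_nat False \<omega> \<in> Q} = {}"
    using assms(1) by (auto simp: Q_def intro!: exI[of _ 0])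
  moreover have "ruin \<theta> (1 - \<theta>) \<in> sets (bern_seq \<mu>)"
    unfolding ruin_eq_UN_ruin_within by measurable
  ultimately show ?thesis
    using measure_bern_seq_first_step[of Q \<mu>] assms(2,3) q_Q prob_compl by simp
qed

lemma q_theta_ge:
  assumes mgf: "\<mu> * exp (\<theta> - 1) + (1 - \<mu>) * exp \<theta> \<le> 1"
    and "0 < \<theta>" "\<theta> < 1" "0 \<le> \<mu>" "\<mu> \<le> 1" "k \<ge> 1"
  shows "\<mu> ^ k * (1 - exp (- (k * (1 - \<theta>)))) \<le> q_theta \<theta> \<mu>"
proof -
  obtain j where k: "k = Suc j"
    using \<open>k \<ge> 1\<close> by (cases k) auto
  have "measure (bern_seq \<mu>) (ruin \<theta> (1 - \<theta>))
      \<le> 1 - \<mu> ^ j * (1 - exp (- (1 - \<theta> + j * (1 - \<theta>))))"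
    by (rule measure_ruin_le, rule measure_ruin_within_le_climb) (use assms in auto)
  then have "\<mu> ^ j * (1 - exp (- (k * (1 - \<theta>)))) \<le> 1 - measure (bern_seq \<mu>) (ruin \<theta> (1 - \<theta>))"
    by (simp add: k algebra_simps)
  then have "\<mu> * (\<mu> ^ j * (1 - exp (- (k * (1 - \<theta>)))))
      \<le> \<mu> * (1 - measure (bern_seq \<mu>) (ruin \<theta> (1 - \<theta>)))"
    using \<open>0 \<le> \<mu>\<close> by (rule mult_left_mono)
  then show ?thesis
    by (simp add: q_theta_eq_no_ruin[OF assms(2,4,5)] k)
qed

lemma bernoulli_exp_moment_le_one:
  fixes \<theta> \<mu> :: real
  assumes "\<theta> < 1" "\<mu> \<le> 1" "1 - \<mu> \<le> (1 - \<theta>) / 2"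
  shows "\<mu> * exp (\<theta> - 1) + (1 - \<mu>) * exp \<theta> \<le> 1"
proof -
  define e where "e = 1 - \<theta>"
  have "e > 0" using assms by (simp add: e_def)
  have "\<mu> * exp (\<theta> - 1) + (1 - \<mu>) * exp \<theta> = exp (- e) * (1 + (1 - \<mu>) * (exp 1 - 1))"
    by (simp add: e_def algebra_simps flip: exp_add)
  also have "\<dots> \<le> exp (- e) * (1 + e)"
  proof -
    have "(1 - \<mu>) * (exp 1 - 1) \<le> e / 2 * (exp 1 - 1)"
      using assms by (intro mult_right_mono) (auto simp: e_def)
    also have "\<dots> \<le> e"
      using \<open>e > 0\<close> exp_le by simp
    finally show ?thesis by simp
  qed
  also have "\<dots> \<le> exp (- e) * exp e"
    using exp_ge_add_one_self[of e] by (simp add: add.commute)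
  finally show ?thesis
    by (simp flip: exp_add)
qed

lemma exp_neg_half_le: "exp (- 1 / 2) \<le> 1 - exp (- 1 :: real)"
proof -
  define y where "y = exp (- 1 / 2 :: real)"
  have "y > 0" by (simp add: y_def)
  have "13 / 8 \<le> exp (1 / 2 :: real)"
    using exp_lower_Taylor_quadratic[of "1 / 2 :: real"] by (simp add: power2_eq_square)
  then have "y * (13 / 8) \<le> y * exp (1 / 2)"
    using \<open>y > 0\<close> by (intro mult_left_mono) auto
  also have "\<dots> = 1"
    by (simp add: y_def flip: exp_add)
  finally have "y \<le> 8 / 13" by simp
  then have "y * y \<le> 8 / 13 * y"
    using \<open>y > 0\<close> by (intro mult_right_mono) auto
  moreover have "exp (- 1 :: real) = y * y"
    by (simp add: y_def flip: exp_add)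
  ultimately show ?thesis
    using \<open>y \<le> 8 / 13\<close> unfolding y_def by linarith
qed

lemma power_nat_ceiling_inverse_ge:
  fixes e \<mu> :: real
  assumes "0 < e" "0 \<le> \<mu>" "\<mu> \<le> 1" "1 - \<mu> \<le> e / 2"
  shows "(1 - e) / 2 \<le> \<mu> ^ nat \<lceil>1 / e\<rceil>"
proof -
  define K where "K = nat \<lceil>1 / e\<rceil>"
  have "real K < 1 / e + 1"
    using assms(1) ceiling_correct[of "1 / e"] by (simp add: K_def)
  then have "K * (1 - \<mu>) \<le> (1 / e + 1) * (e / 2)"
    using assms by (intro mult_mono) auto
  also have "\<dots> = (1 + e) / 2"
    using assms(1) by (simp add: field_simps)
  finally show ?thesis
    using Bernoulli_inequality[of "\<mu> - 1" K] assms(2) by (simp add: K_def algebra_simps)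
qed

theorem lemma2:
  fixes \<theta> \<mu> :: real
  assumes "\<theta> > 2/3"
    and "0 \<le> \<mu>" and "\<mu> \<le> 1"
    and "\<mu> > \<theta>"
    and "\<mu> \<ge> (1 + \<theta>) / 2"
  shows "q_theta \<theta> \<mu> \<ge> exp (-0.5) / 3"
proof -
  define e where "e = 1 - \<theta>"
  have e: "0 < e" "e < 1 / 3" "1 - \<mu> \<le> e / 2"
    using assms by (auto simp: e_def)
  define K where "K = nat \<lceil>1 / e\<rceil>"
  have "1 / e \<le> K"
    unfolding K_def by (rule real_nat_ceiling_ge)
  then have K_ge: "1 \<le> K * e"
    using e by (simp add: field_simps)
  then have "K \<ge> 1"
    by (cases K) auto
  have "1 / 3 * (1 - exp (- 1)) \<le> \<mu> ^ K * (1 - exp (- (K * e)))"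
    using power_nat_ceiling_inverse_ge[of e \<mu>] e assms K_ge
    by (intro mult_mono) (auto simp: K_def)
  also have "\<dots> \<le> q_theta \<theta> \<mu>"
    unfolding e_def using assms \<open>K \<ge> 1\<close> e
    by (intro q_theta_ge bernoulli_exp_moment_le_one) (auto simp: e_def)
  finally show ?thesis
    using exp_neg_half_le by simp
qed

end
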